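(* Consider the following setting. Let $x_1,\ldots,x_n$ be points of a set $\mathcal X$, $g:\mathcal X\to\mathbb R$, and $Y_i=g(x_i)+\varepsilon_i$, $i=1,\ldots,n$, with $(\varepsilon_i)$ i.i.d. real random variables. Let $\rho:\mathbb R\to[0,\infty)$ be convex with $\rho(0)=0$, and for $U\subset\mathcal X$ let $m(Y_i,\,x_i\in U)$ be a selected minimizer over $\mu\in\mathbb R$ of $\sum_{i:x_i\in U}\rho(Y_i-\mu)$. Assume the following monotonicity property (Assumption M): for any set $S$ and any partition $S=\bigcup_jS_j$ into pairwise disjoint sets $S_j$, and any realisation of the data, $\min_j m(Y_i,\,x_i\in S_j)\le m(Y_i,\,x_i\in S)\le\max_j m(Y_i,\,x_i\in S_j)$. Let $U_0\subset U_1\subset\cdots\subset U_K$ be nested subsets of $\mathcal X$, $\tilde\theta_k:=m(Y_i,\,x_i\in U_k)$ and $\tilde\theta_{(k+1)\setminus k}:=m(Y_i,\,x_i\in U_{k+1}\setminus U_k)$. Fix $r\ge1$ and define $s_j$, $s_{kj}$, the critical values $z_0,\ldots,z_{K-1}>0$, $z_K:=1$, the selected index $\hat k$ and $\hat\theta:=\tilde\theta_{\hat k}$ as in the context. Then for every $k=0,\ldots,K-1$ and every realisation of the data, \[\big|\hat\theta-\tilde\theta_k\big|\,\mathbf 1(\hat k>k)\le\max_{j=k+1,\ldots,K-1}\big(z_ks_{jk}+z_{j+1}s_{j+1}\big).\]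
   Context: $\mathbb E_0$ denotes expectation under the model with $g\equiv0$ (i.e. $Y_i=\varepsilon_i$), and the stochastic error levels are $s_j:=\mathbb E_0[|\tilde\theta_j|^r]^{1/r}$ and $s_{kj}:=\mathbb E_0[|\tilde\theta_{(k+1)\setminus k}-\tilde\theta_j|^r]^{1/r}$ for $0\le j\le k\le K-1$ (assumed finite). Given critical values $z_0,\ldots,z_{K-1}>0$ and $z_K:=1$, the selected index is \[\hat k:=\inf\Big\{k\in\{0,\ldots,K-1\}\,\Big|\,\exists j\le k:\ |\tilde\theta_{(k+1)\setminus k}-\tilde\theta_j|>z_js_{kj}+z_{k+1}s_{k+1}\Big\}\wedge K\] (with $\inf\emptyset=\infty$), i.e. $k$ is increased sequentially from $0$ as long as all these tests are passed. *)

theory Defs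
  imports "HOL-Probability.Probability"
begin

definition loc_obj :: "nat \<Rightarrow> (nat \<Rightarrow> 'x) \<Rightarrow> (real \<Rightarrow> real) \<Rightarrow> (nat \<Rightarrow> real) \<Rightarrow> 'x set \<Rightarrow> real \<Rightarrow> real" where
  "loc_obj n x \<rho> Y U \<mu> = (\<Sum>i\<in>{i. i \<in> {1..n} \<and> x i \<in> U}. \<rho> (Y i - \<mu>))"

definition is_selected_minimizer :: "nat \<Rightarrow> (nat \<Rightarrow> 'x) \<Rightarrow> (real \<Rightarrow> real) \<Rightarrow> ((nat \<Rightarrow> real) \<Rightarrow> 'x set \<Rightarrow> real) \<Rightarrow> bool" where
  "is_selected_minimizer n x \<rho> m \<longleftrightarrow>
     (\<forall>Y U \<mu>. loc_obj n x \<rho> Y U (m Y U) \<le> loc_obj n x \<rho> Y U \<mu>)"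

definition assumption_M :: "((nat \<Rightarrow> real) \<Rightarrow> 'x set \<Rightarrow> real) \<Rightarrow> (nat \<Rightarrow> real) \<Rightarrow> bool" where
  "assumption_M m Y \<longleftrightarrow>
     (\<forall>(J::nat set) (P::nat \<Rightarrow> 'x set). finite J \<longrightarrow> J \<noteq> {} \<longrightarrow> disjoint_family_on P J \<longrightarrow>
        (MIN j\<in>J. m Y (P j)) \<le> m Y (\<Union>j\<in>J. P j) \<and> m Y (\<Union>j\<in>J. P j) \<le> (MAX j\<in>J. m Y (P j)))"

definition Lr_level :: "'w measure \<Rightarrow> real \<Rightarrow> ('w \<Rightarrow> real) \<Rightarrow> real" where
  "Lr_level M r f = (integral\<^sup>L M (\<lambda>\<omega>. \<bar>f \<omega>\<bar> powr r)) powr (1 / r)"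

text \<open>Selected index khat: the first k in {0..K-1} at which some test with j \<le> k rejects,
  or K if no test rejects. thd k stands for theta~_{(k+1)\k}, th j for theta~_j.\<close>
definition rejects_at :: "(nat \<Rightarrow> real) \<Rightarrow> (nat \<Rightarrow> real) \<Rightarrow> (nat \<Rightarrow> real) \<Rightarrow> (nat \<Rightarrow> real)
    \<Rightarrow> (nat \<Rightarrow> nat \<Rightarrow> real) \<Rightarrow> nat \<Rightarrow> bool" where
  "rejects_at th thd z s skj k \<longleftrightarrow>
     (\<exists>j\<le>k. \<bar>thd k - th j\<bar> > z j * skj k j + z (k + 1) * s (k + 1))"

definition khat :: "nat \<Rightarrow> (nat \<Rightarrow> real) \<Rightarrow> (nat \<Rightarrow> real) \<Rightarrow> (nat \<Rightarrow> real) \<Rightarrow> (nat \<Rightarrow> real)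
    \<Rightarrow> (nat \<Rightarrow> nat \<Rightarrow> real) \<Rightarrow> nat" where
  "khat K th thd z s skj =
     (if \<exists>k<K. rejects_at th thd z s skj k
      then (LEAST k. k < K \<and> rejects_at th thd z s skj k) else K)"

end

theory Submission
  imports Defs
begin

text \<open>If \<open>khat > k\<close>, every test with index \<open>j \<in> {k..<khat}\<close> was passed, so each
  \<open>thd j\<close> lies within \<open>z k * skj j k + z (j + 1) * s (j + 1)\<close> of \<open>th k\<close>. The set \<open>U khat\<close> is
  the disjoint union of \<open>U k\<close> and the layers \<open>U (j + 1) - U j\<close>, \<open>k \<le> j < khat\<close>, whose estimates
  are \<open>th k\<close> and the \<open>thd j\<close>. Assumption M puts \<open>th khat\<close> between the smallest and the largest
  of these estimates, hence within the same bound of \<open>th k\<close>.\<close>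

lemma Lr_level_nonneg: "Lr_level M r f \<ge> 0"
  unfolding Lr_level_def by simp

lemma khat_le: "khat K th thd z s skj \<le> K"
  unfolding khat_def by (auto intro: Least_le[THEN order.trans])

lemma not_rejects_at_below_khat:
  assumes "j < khat K th thd z s skj"
  shows "\<not> rejects_at th thd z s skj j"
proof (cases "\<exists>k<K. rejects_at th thd z s skj k")
  case True
  then have "\<not> (j < K \<and> rejects_at th thd z s skj j)"
    using assms not_less_Least unfolding khat_def by auto
  then show ?thesis
    using assms khat_le order.strict_trans2 by blast
next
  case False
  then show ?thesis
    using assms khat_le order.strict_trans2 by blast
qed

lemma assumption_M_dist_le:
  fixes J :: "nat set"
  assumes "assumption_M m Y" and "finite J" and "J \<noteq> {}" and "disjoint_family_on P J"
    and "\<And>j. j \<in> J \<Longrightarrow> \<bar>m Y (P j) - c\<bar> \<le> B"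
  shows "\<bar>m Y (\<Union>j\<in>J. P j) - c\<bar> \<le> B"
proof -
  let ?f = "\<lambda>j. m Y (P j)"
  have between: "(MIN j\<in>J. ?f j) \<le> m Y (\<Union>j\<in>J. P j)" "m Y (\<Union>j\<in>J. P j) \<le> (MAX j\<in>J. ?f j)"
    using assms(1)[unfolded assumption_M_def, rule_format, OF assms(2-4)] by simp_all
  have "(MIN j\<in>J. ?f j) \<in> ?f ` J" "(MAX j\<in>J. ?f j) \<in> ?f ` J"
    using assms(2,3) by (intro Min_in Max_in; simp)+
  then obtain a b where "a \<in> J" "(MIN j\<in>J. ?f j) = ?f a" "b \<in> J" "(MAX j\<in>J. ?f j) = ?f b"
    by blast
  then show ?thesis
    using between assms(5)[of a] assms(5)[of b] by linarith
qed

definition layer :: "(nat \<Rightarrow> 'a set) \<Rightarrow> nat \<Rightarrow> nat \<Rightarrow> 'a set" where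
  "layer U k i = (if i = k then U k else U i - U (i - 1))"

lemma chain_subset:
  assumes "\<And>j. a \<le> j \<Longrightarrow> j < b \<Longrightarrow> U j \<subseteq> U (Suc j)" and "a \<le> i" "i \<le> i'" "i' \<le> b"
  shows "U i \<subseteq> U i'"
  using assms(3,4)
proof (induction i' rule: dec_induct)
  case (step i')
  then show ?case
    using assms(1)[of i'] assms(2) by auto
qed simp

lemma UN_layer:
  assumes "\<And>j. k \<le> j \<Longrightarrow> j < h \<Longrightarrow> U j \<subseteq> U (Suc j)" and "k \<le> h"
  shows "(\<Union>i\<in>{k..h}. layer U k i) = U h"
  using assms(2,1)
proof (induction h rule: dec_induct)
  case base
  then show ?case by (simp add: layer_def)
next
  case (step h)
  have "(\<Union>i\<in>{k..Suc h}. layer U k i) = layer U k (Suc h) \<union> (\<Union>i\<in>{k..h}. layer U k i)"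
    using step.hyps by (simp add: atLeastAtMostSuc_conv)
  also have "\<dots> = (U (Suc h) - U h) \<union> U h"
    using step by (simp add: layer_def)
  also have "\<dots> = U (Suc h)"
    using step.prems[of h] step.hyps by auto
  finally show ?case .
qed

lemma disjoint_family_on_layer:
  assumes "\<And>j. k \<le> j \<Longrightarrow> j < h \<Longrightarrow> U j \<subseteq> U (Suc j)"
  shows "disjoint_family_on (layer U k) {k..h}"
proof -
  have disjoint: "layer U k i \<inter> layer U k i' = {}" if "k \<le> i" "i < i'" "i' \<le> h" for i i'
  proof -
    have "U i \<subseteq> U (i' - 1)"
      using chain_subset[where U=U and a=k and b=h, OF assms, of i "i' - 1"] that by simp
    then have "layer U k i \<subseteq> U (i' - 1)"
      by (auto simp: layer_def)
    then show ?thesis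
      using that by (auto simp: layer_def)
  qed
  show ?thesis
    unfolding disjoint_family_on_def
  proof (intro ballI impI)
    fix i i' assume "i \<in> {k..h}" "i' \<in> {k..h}" "i \<noteq> i'"
    then consider "k \<le> i" "i < i'" "i' \<le> h" | "k \<le> i'" "i' < i" "i \<le> h"
      by fastforce
    then show "layer U k i \<inter> layer U k i' = {}"
      by cases (use disjoint in \<open>auto simp: Int_commute\<close>)
  qed
qed

theorem proposition3p4:
  fixes M :: "'w measure"
    and n K k :: nat
    and x :: "nat \<Rightarrow> 'x"
    and g :: "'x \<Rightarrow> real"
    and \<epsilon> :: "nat \<Rightarrow> 'w \<Rightarrow> real"
    and \<rho> :: "real \<Rightarrow> real"
    and m :: "(nat \<Rightarrow> real) \<Rightarrow> 'x set \<Rightarrow> real"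
    and U :: "nat \<Rightarrow> 'x set"
    and z :: "nat \<Rightarrow> real"
    and r :: real
    and \<omega> :: 'w
  defines "s \<equiv> (\<lambda>j. Lr_level M r (\<lambda>\<omega>'. m (\<lambda>i. \<epsilon> i \<omega>') (U j)))"
    and "skj \<equiv> (\<lambda>k' j. Lr_level M r (\<lambda>\<omega>'. m (\<lambda>i. \<epsilon> i \<omega>') (U (k' + 1) - U k') - m (\<lambda>i. \<epsilon> i \<omega>') (U j)))"
    and "th \<equiv> (\<lambda>j. m (\<lambda>i. g (x i) + \<epsilon> i \<omega>) (U j))"
    and "thd \<equiv> (\<lambda>k'. m (\<lambda>i. g (x i) + \<epsilon> i \<omega>) (U (k' + 1) - U k'))"
  assumes "prob_space M"
    and "\<And>i. i \<in> {1..n} \<Longrightarrow> \<epsilon> i \<in> borel_measurable M"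
    and "prob_space.indep_vars M (\<lambda>_. borel) \<epsilon> {1..n}"
    and "\<And>i. i \<in> {1..n} \<Longrightarrow> distr M borel (\<epsilon> i) = distr M borel (\<epsilon> 1)"
    and "convex_on UNIV \<rho>" and "\<And>t. \<rho> t \<ge> 0" and "\<rho> 0 = 0"
    and "is_selected_minimizer n x \<rho> m"
    and "\<And>\<omega>'. \<omega>' \<in> space M \<Longrightarrow> assumption_M m (\<lambda>i. g (x i) + \<epsilon> i \<omega>')"
    and "\<And>j. j < K \<Longrightarrow> U j \<subseteq> U (j + 1)"
    and "r \<ge> 1"
    and "\<And>j. j \<le> K \<Longrightarrow> integrable M (\<lambda>\<omega>'. \<bar>m (\<lambda>i. \<epsilon> i \<omega>') (U j)\<bar> powr r)"
    and "\<And>k' j. j \<le> k' \<Longrightarrow> k' < K \<Longrightarrow>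
           integrable M (\<lambda>\<omega>'. \<bar>m (\<lambda>i. \<epsilon> i \<omega>') (U (k' + 1) - U k') - m (\<lambda>i. \<epsilon> i \<omega>') (U j)\<bar> powr r)"
    and "\<And>j. j < K \<Longrightarrow> z j > 0"
    and "z K = 1"
    and "k < K"
    and "\<omega> \<in> space M"
  shows "\<bar>th (khat K th thd z s skj) - th k\<bar> * of_bool (khat K th thd z s skj > k)
           \<le> (MAX j\<in>{k..<K}. z k * skj j k + z (j + 1) * s (j + 1))"
proof -
  define h where "h = khat K th thd z s skj"
  define B where "B = (MAX j\<in>{k..<K}. z k * skj j k + z (j + 1) * s (j + 1))"
  define Y where "Y = (\<lambda>i. g (x i) + \<epsilon> i \<omega>)"
  have h_le: "h \<le> K"
    unfolding h_def by (rule khat_le)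
  have test_le_B: "z k * skj j k + z (j + 1) * s (j + 1) \<le> B" if "k \<le> j" "j < K" for j
    unfolding B_def using that by (intro Max_ge) auto
  have "0 \<le> z k * skj k k + z (k + 1) * s (k + 1)"
    using assms(18)[of k] assms(18)[of "k + 1"] assms(19,20)
    by (cases "k + 1 = K") (auto simp: s_def skj_def Lr_level_nonneg)
  then have B_nonneg: "0 \<le> B"
    using test_le_B[of k] assms(20) by linarith
  have layers_close: "\<bar>m Y (layer U k i) - th k\<bar> \<le> B" if "i \<in> {k..h}" for i
  proof (cases "i = k")
    case False
    define j where "j = i - 1"
    have j: "i = Suc j" "k \<le> j" "j < h"
      using False that unfolding j_def by auto
    then have "\<bar>m Y (layer U k i) - th k\<bar> \<le> z k * skj j k + z (j + 1) * s (j + 1)"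
      using not_rejects_at_below_khat[of j K th thd z s skj] unfolding h_def
      by (simp add: rejects_at_def layer_def thd_def Y_def not_less)
    also have "\<dots> \<le> B"
      using test_le_B j h_le by simp
    finally show ?thesis .
  qed (simp add: layer_def th_def Y_def B_nonneg)
  have chain: "U j \<subseteq> U (Suc j)" if "k \<le> j" "j < h" for j
    using assms(14)[of j] that h_le by simp
  have "\<bar>th h - th k\<bar> \<le> B" if "k < h"
  proof -
    have monotone: "assumption_M m Y"
      unfolding Y_def by (rule assms(13)[OF assms(21)])
    have disjoint: "disjoint_family_on (layer U k) {k..h}"
      using chain by (rule disjoint_family_on_layer)
    have "\<bar>m Y (\<Union>i\<in>{k..h}. layer U k i) - th k\<bar> \<le> B"
      using assumption_M_dist_le[OF monotone finite_atLeastAtMost _ disjoint layers_close] that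
      by simp
    moreover have "(\<Union>i\<in>{k..h}. layer U k i) = U h"
      using chain that by (simp add: UN_layer)
    ultimately show ?thesis
      by (simp add: th_def Y_def)
  qed
  then show ?thesis
    using B_nonneg unfolding h_def[symmetric] B_def[symmetric] by (cases "k < h") simp_all
qed

end
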